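(* $E_3<_{\mathrm{Learn}}\mathbf{PL}$: every $E_3$-learnable family of structures is $\mathbf{PL}$-learnable, and there is a $\mathbf{PL}$-learnable family that is not $E_3$-learnable.
   Context: All structures are countable, have domain $\mathbb{N}$, are in a finite relational signature, and are identified with their atomic diagrams (elements of $2^{\mathbb{N}}$). A family of structures $\mathfrak{K}$ is a countable set of pairwise nonisomorphic such structures; $\mathcal{S}\restriction_s$ is the finite substructure on $\{0,\dots,s\}$; $\mathrm{LD}(\mathfrak{K})\subseteq2^{\mathbb{N}}$ is the set of structures with domain $\mathbb{N}$ isomorphic to a member of $\mathfrak{K}$ (subspace topology). For an equivalence relation $E$ on a space $X$, $\mathfrak{K}$ is $E$-learnable if there is a continuous $\Gamma:\mathrm{LD}(\mathfrak{K})\to X$ with $\mathcal{S}\cong\mathcal{S}'\iff\Gamma(\mathcal{S})E\Gamma(\mathcal{S}')$ on $\mathrm{LD}(\mathfrak{K})$. Fix a computable bijection $\langle\cdot,\cdot\rangle:\mathbb{N}^2\to\mathbb{N}$; $p^{[m]}(n)=p(\langle m,n\rangle)$ for $p\in\mathbb{N}^{\mathbb{N}\times\mathbb{N}}$; $p\,E_0\,q\iff\exists m\forall n\ge m\ p(n)=q(n)$; $p\,E_3\,q\iff\forall m\ p^{[m]}E_0q^{[m]}$. A learner is an arbitrary function from $\{\mathcal{S}\restriction_s:\mathcal{S}\in\mathrm{LD}(\mathfrak{K})\}$ to $\{\ulcorner\mathcal{A}\urcorner:\mathcal{A}\in\mathfrak{K}\}\cup\{?\}$. $\mathfrak{K}$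 is $\mathbf{PL}$-learnable if some learner $\mathbf{M}$ satisfies: for every $\mathcal{S}\in\mathrm{LD}(\mathfrak{K})$ and $\mathcal{A}\in\mathfrak{K}$, $\{n:\mathbf{M}(\mathcal{S}\restriction_n)=\ulcorner\mathcal{A}\urcorner\}$ is infinite iff $\mathcal{A}\cong\mathcal{S}$. $X<_{\mathrm{Learn}}Y$ means every $X$-learnable family is $Y$-learnable but not conversely. *)

theory Defs
  imports "HOL-Library.Nat_Bijection" "HOL-Library.Countable_Set"
begin

text \<open>A finite relational signature is given by the list of arities of its
relation symbols (symbol i has arity sig ! i, for i < length sig).
A structure with domain the natural numbers is identified with its atomic diagram,
here represented as the characteristic function of its relations.\<close>

type_synonym struc = "nat \<Rightarrow> nat list \<Rightarrow> bool"

definition is_struc :: "nat list \<Rightarrow> struc \<Rightarrow> bool" where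
  "is_struc sig S \<longleftrightarrow> (\<forall>i xs. S i xs \<longrightarrow> i < length sig \<and> length xs = sig ! i)"

definition iso :: "struc \<Rightarrow> struc \<Rightarrow> bool" where
  "iso S T \<longleftrightarrow> (\<exists>f. bij f \<and> (\<forall>i xs. S i xs \<longleftrightarrow> T i (map f xs)))"

definition restr :: "struc \<Rightarrow> nat \<Rightarrow> nat \<times> struc" where
  "restr S s = (s, \<lambda>i xs. S i xs \<and> (\<forall>x\<in>set xs. x \<le> s))"

definition family :: "nat list \<Rightarrow> struc set \<Rightarrow> bool" where
  "family sig K \<longleftrightarrow> countable K \<and> (\<forall>A\<in>K. is_struc sig A) \<and>
     (\<forall>A\<in>K. \<forall>B\<in>K. A \<noteq> B \<longrightarrow> \<not> iso A B)"

definition LD :: "nat list \<Rightarrow> struc set \<Rightarrow> struc set" where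
  "LD sig K = {S. is_struc sig S \<and> (\<exists>A\<in>K. iso S A)}"

text \<open>Continuity of a map from the subspace LD(K) of Cantor space (atomic diagrams)
into Baire space, written out: basic neighbourhoods of a structure in the atomic diagram
topology are given by fixing its restriction to {0,...,s}.\<close>
definition cont_on_LD :: "nat list \<Rightarrow> struc set \<Rightarrow> (struc \<Rightarrow> nat \<Rightarrow> nat) \<Rightarrow> bool" where
  "cont_on_LD sig K \<Gamma> \<longleftrightarrow> (\<forall>S\<in>LD sig K. \<forall>n. \<exists>s. \<forall>S'\<in>LD sig K.
      restr S' s = restr S s \<longrightarrow> (\<forall>k<n. \<Gamma> S' k = \<Gamma> S k))"

definition E0 :: "(nat \<Rightarrow> nat) \<Rightarrow> (nat \<Rightarrow> nat) \<Rightarrow> bool" where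
  "E0 p q \<longleftrightarrow> (\<exists>m. \<forall>n\<ge>m. p n = q n)"

definition column :: "(nat \<Rightarrow> nat) \<Rightarrow> nat \<Rightarrow> nat \<Rightarrow> nat" where
  "column p m = (\<lambda>n. p (prod_encode (m, n)))"

definition E3 :: "(nat \<Rightarrow> nat) \<Rightarrow> (nat \<Rightarrow> nat) \<Rightarrow> bool" where
  "E3 p q \<longleftrightarrow> (\<forall>m. E0 (column p m) (column q m))"

definition E3_learnable :: "nat list \<Rightarrow> struc set \<Rightarrow> bool" where
  "E3_learnable sig K \<longleftrightarrow> (\<exists>\<Gamma>. cont_on_LD sig K \<Gamma> \<and>
     (\<forall>S\<in>LD sig K. \<forall>S'\<in>LD sig K. iso S S' \<longleftrightarrow> E3 (\<Gamma> S) (\<Gamma> S')))"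

text \<open>A learner maps finite substructures to a conjecture: Some A (the code of A \<in> K) or None (?).\<close>
definition PL_learnable :: "nat list \<Rightarrow> struc set \<Rightarrow> bool" where
  "PL_learnable sig K \<longleftrightarrow> (\<exists>M :: nat \<times> struc \<Rightarrow> struc option.
     (\<forall>S\<in>LD sig K. \<forall>n. M (restr S n) = None \<or> (\<exists>A\<in>K. M (restr S n) = Some A)) \<and>
     (\<forall>S\<in>LD sig K. \<forall>A\<in>K. infinite {n. M (restr S n) = Some A} \<longleftrightarrow> iso A S))"

end

theory Submission
  imports Defs
begin

text \<open>
  An E3-reduction \<open>\<Gamma>\<close> maps distinct members \<open>A \<noteq> B\<close> of the family to sequences whose columns
  differ infinitely often in some column \<open>c(A, B)\<close>, and maps every copy \<open>S\<close> of \<open>A\<close> to a sequence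
  eventually agreeing with \<open>\<Gamma>(A)\<close> in every column. Since \<open>\<Gamma>\<close> is continuous, finite pieces of
  \<open>S\<close> reveal more and more of \<open>\<Gamma>(S)\<close>. The learner lets each member \<open>A\<close> compete against its rivals
  \<open>B\<close> in the columns \<open>c(A, B)\<close>, preferring the candidate whose last visible disagreement with
  \<open>\<Gamma>(S)\<close> comes earlier; a counter for each candidate turns "eventually wins against all rivals"
  into "is confirmed infinitely often", and the least confirmed candidate is guessed.

  The separating family consists of the equivalence structures \<open>A\<^sub>k\<close> (\<open>k \<ge> 1\<close>) with infinitely
  many classes of every finite size except \<open>k\<close>, and infinitely many infinite classes. It is
  PL-learnable by guessing the least \<open>k\<close> such that no visible class looks like a class of size
  \<open>k\<close>. It is not E3-learnable: by a Baire category argument on copies, a finite piece of a copy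
  of \<open>A\<^sub>l\<close> forces the column separating \<open>\<Gamma>(A\<^sub>1)\<close> from \<open>\<Gamma>(A\<^sub>2)\<close> to agree eventually with that
  of \<open>\<Gamma>(A\<^sub>l)\<close>. For \<open>k\<close> beyond all class sizes occurring in the two forcing pieces, every
  finite part of some copy of \<open>A\<^sub>k\<close> is a finite part of a copy of \<open>A\<^sub>1\<close> extending the first
  piece, and likewise for \<open>A\<^sub>2\<close>; so the column of \<open>\<Gamma>(A\<^sub>k)\<close> eventually agrees with those of both
  \<open>\<Gamma>(A\<^sub>1)\<close> and \<open>\<Gamma>(A\<^sub>2)\<close>, which is impossible.
\<close>

lemma E0_sym: "E0 p q \<Longrightarrow> E0 q p"
  unfolding E0_def by metis

lemma E0_trans: "E0 p q \<Longrightarrow> E0 q r \<Longrightarrow> E0 p r"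
  unfolding E0_def by (metis le_trans nat_le_linear)

lemma iso_refl: "iso S S"
  unfolding iso_def by (rule exI[of _ id]) simp

lemma iso_sym:
  assumes "iso S T"
  shows "iso T S"
proof -
  obtain f where f: "bij f" "\<And>i xs. S i xs \<longleftrightarrow> T i (map f xs)"
    using assms unfolding iso_def by blast
  have "T i ys \<longleftrightarrow> S i (map (inv f) ys)" for i ys
  proof -
    have "map f (map (inv f) ys) = ys"
      using f(1) by (simp add: bij_is_surj surj_f_inv_f map_idI)
    then show ?thesis
      using f(2) by metis
  qed
  then show ?thesis
    unfolding iso_def using bij_imp_bij_inv[OF f(1)] by blast
qed

lemma iso_trans:
  assumes "iso S T" "iso T U"
  shows "iso S U"
proof -
  obtain f g where "bij f" "\<And>i xs. S i xs \<longleftrightarrow> T i (map f xs)"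
    and "bij g" "\<And>i xs. T i xs \<longleftrightarrow> U i (map g xs)"
    using assms unfolding iso_def by blast
  then show ?thesis
    unfolding iso_def by (intro exI[of _ "g \<circ> f"]) (simp add: bij_comp)
qed

lemma family_subset_LD: "family sig K \<Longrightarrow> K \<subseteq> LD sig K"
  unfolding family_def LD_def using iso_refl by blast

lemma family_iso_unique:
  assumes "family sig K" "A \<in> K" "B \<in> K" "iso A S" "iso B S"
  shows "A = B"
  using assms iso_sym iso_trans unfolding family_def by blast

lemma restr_eq_iff:
  "restr S t = restr T t \<longleftrightarrow> (\<forall>i xs. (\<forall>x\<in>set xs. x \<le> t) \<longrightarrow> S i xs = T i xs)"
  unfolding restr_def by (auto simp: fun_eq_iff)

lemma restr_mono: "restr S t = restr T t \<Longrightarrow> u \<le> t \<Longrightarrow> restr S u = restr T u"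
  unfolding restr_eq_iff by (meson le_trans)

lemma PL_learnableI:
  fixes F :: "struc \<Rightarrow> nat \<Rightarrow> struc option"
  assumes local: "\<And>S T t. S \<in> LD sig K \<Longrightarrow> T \<in> LD sig K \<Longrightarrow> restr S t = restr T t \<Longrightarrow> F S t = F T t"
    and range: "\<And>S t A. S \<in> LD sig K \<Longrightarrow> F S t = Some A \<Longrightarrow> A \<in> K"
    and correct: "\<And>S A. S \<in> LD sig K \<Longrightarrow> A \<in> K \<Longrightarrow> infinite {t. F S t = Some A} \<longleftrightarrow> iso A S"
  shows "PL_learnable sig K"
proof -
  define M where "M \<sigma> = (if \<exists>S\<in>LD sig K. restr S (fst \<sigma>) = \<sigma>
      then F (SOME S. S \<in> LD sig K \<and> restr S (fst \<sigma>) = \<sigma>) (fst \<sigma>) else None)" for \<sigma>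
  have M: "M (restr S t) = F S t" if S: "S \<in> LD sig K" for S t
  proof -
    have fst_restr: "fst (restr S t) = t"
      by (simp add: restr_def)
    define T where "T = (SOME T. T \<in> LD sig K \<and> restr T t = restr S t)"
    have T: "T \<in> LD sig K" "restr T t = restr S t"
      unfolding T_def by (rule someI2[of _ S], simp add: S, simp)+
    then have "M (restr S t) = F T t"
      using S unfolding M_def fst_restr T_def[symmetric] by auto
    also have "\<dots> = F S t"
      using local[OF T(1) S T(2)] by simp
    finally show ?thesis .
  qed
  show ?thesis
    unfolding PL_learnable_def
  proof (intro exI[of _ M] conjI ballI allI)
    fix S t
    assume "S \<in> LD sig K"
    then show "M (restr S t) = None \<or> (\<exists>A\<in>K. M (restr S t) = Some A)"
      using range by (cases "F S t") (auto simp: M)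
  qed (simp add: M correct)
qed

definition E3_reduction :: "nat list \<Rightarrow> struc set \<Rightarrow> (struc \<Rightarrow> nat \<Rightarrow> nat) \<Rightarrow> bool" where
  "E3_reduction sig K \<Gamma> \<longleftrightarrow> cont_on_LD sig K \<Gamma> \<and>
     (\<forall>S\<in>LD sig K. \<forall>S'\<in>LD sig K. iso S S' \<longleftrightarrow> E3 (\<Gamma> S) (\<Gamma> S'))"

lemma E3_learnable_iff: "E3_learnable sig K \<longleftrightarrow> (\<exists>\<Gamma>. E3_reduction sig K \<Gamma>)"
  by (simp add: E3_learnable_def E3_reduction_def)

lemma E3_reductionD:
  assumes "E3_reduction sig K \<Gamma>"
  shows "cont_on_LD sig K \<Gamma>"
    and "S \<in> LD sig K \<Longrightarrow> S' \<in> LD sig K \<Longrightarrow> iso S S' \<longleftrightarrow> E3 (\<Gamma> S) (\<Gamma> S')"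
  using assms unfolding E3_reduction_def by blast+

definition separating_column :: "(struc \<Rightarrow> nat \<Rightarrow> nat) \<Rightarrow> struc \<Rightarrow> struc \<Rightarrow> nat" where
  "separating_column \<Gamma> A B = (SOME c. \<not> E0 (column (\<Gamma> A) c) (column (\<Gamma> B) c))"

lemma separating_column:
  assumes "family sig K" "E3_reduction sig K \<Gamma>" "A \<in> K" "B \<in> K" "A \<noteq> B"
  shows "\<not> E0 (column (\<Gamma> A) (separating_column \<Gamma> A B)) (column (\<Gamma> B) (separating_column \<Gamma> A B))"
proof -
  have "\<not> E3 (\<Gamma> A) (\<Gamma> B)"
    using assms family_subset_LD[OF assms(1)] E3_reductionD(2)[OF assms(2)]
    unfolding family_def by blast
  then have "\<exists>c. \<not> E0 (column (\<Gamma> A) c) (column (\<Gamma> B) c)"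
    unfolding E3_def by blast
  then show ?thesis
    unfolding separating_column_def by (rule someI_ex)
qed

section \<open>Counters and least candidates\<close>

text \<open>\<open>P t k\<close> is the \<open>k\<close>-th test of a candidate, performed at stage \<open>t\<close>; the counter moves on to
  the next test whenever the current one is passed.\<close>

primrec counter :: "(nat \<Rightarrow> nat \<Rightarrow> bool) \<Rightarrow> nat \<Rightarrow> nat" where
  "counter P 0 = 0"
| "counter P (Suc t) = counter P t + (if P t (counter P t) then 1 else 0)"

definition counter_advances :: "(nat \<Rightarrow> nat \<Rightarrow> bool) \<Rightarrow> nat \<Rightarrow> bool" where
  "counter_advances P t \<longleftrightarrow> P t (counter P t)"

lemma counter_mono: "t \<le> t' \<Longrightarrow> counter P t \<le> counter P t'"
  by (induction t' rule: dec_induct) auto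

lemma counter_cong: "(\<And>u k. u < t \<Longrightarrow> P u k = P' u k) \<Longrightarrow> counter P t = counter P' t"
  by (induction t) auto

lemma infinite_counter_advances:
  assumes "\<And>k. \<forall>\<^sub>F t in sequentially. P t k"
  shows "infinite {t. counter_advances P t}"
proof
  assume "finite {t. counter_advances P t}"
  then obtain m where "\<And>t. counter_advances P t \<Longrightarrow> t \<le> m"
    by (auto simp: finite_nat_set_iff_bounded_le)
  then have T: "\<And>t. Suc m \<le> t \<Longrightarrow> \<not> P t (counter P t)"
    unfolding counter_advances_def by fastforce
  define T where "T = Suc m"
  have stuck: "T \<le> t \<Longrightarrow> counter P t = counter P T" for t
    by (induction t rule: dec_induct) (auto simp: T_def dest: T)
  obtain N where "\<And>t. N \<le> t \<Longrightarrow> P t (counter P T)"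
    using assms[of "counter P T"] by (auto simp: eventually_sequentially)
  then show False
    using T[of "max T N"] stuck[of "max T N"] by (simp add: T_def)
qed

lemma counter_unbounded:
  assumes "infinite {t. counter_advances P t}"
  shows "\<exists>t. k \<le> counter P t"
proof (induction k)
  case (Suc k)
  then obtain t0 where "k \<le> counter P t0"
    by blast
  moreover obtain t where "t0 \<le> t" "counter_advances P t"
    using assms unfolding infinite_nat_iff_unbounded_le by blast
  ultimately have "Suc k \<le> counter P (Suc t)"
    using counter_mono[of t0 t P] by (simp add: counter_advances_def)
  then show ?case ..
qed simp

lemma finite_counter_advances:
  assumes "\<forall>\<^sub>F t in sequentially. \<forall>k\<ge>k0. \<not> P t k"
  shows "finite {t. counter_advances P t}"
proof (rule ccontr)
  assume advances: "infinite {t. counter_advances P t}"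
  obtain T where T: "\<And>t k. T \<le> t \<Longrightarrow> k0 \<le> k \<Longrightarrow> \<not> P t k"
    using assms by (auto simp: eventually_sequentially)
  obtain t1 where t1: "k0 \<le> counter P t1"
    using counter_unbounded[of P, OF advances] by blast
  obtain t where "max T t1 \<le> t" "counter_advances P t"
    using advances unfolding infinite_nat_iff_unbounded_le by blast
  then show False
    using T t1 counter_mono[of t1 t P] by (auto simp: counter_advances_def)
qed

definition least_candidate :: "nat set \<Rightarrow> (nat \<Rightarrow> bool) \<Rightarrow> nat option" where
  "least_candidate I Q = (if \<exists>i\<in>I. Q i then Some (LEAST i. i \<in> I \<and> Q i) else None)"

lemma least_candidate_SomeD:
  assumes "least_candidate I Q = Some i"
  shows "i \<in> I" "Q i"
proof -
  have "\<exists>i\<in>I. Q i" and i: "i = (LEAST i. i \<in> I \<and> Q i)"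
    using assms by (auto simp: least_candidate_def split: if_splits)
  then show "i \<in> I" "Q i"
    by (metis (mono_tags, lifting) LeastI)+
qed

lemma least_candidate_eqI:
  assumes "i \<in> I" "Q i" "\<And>j. j \<in> I \<Longrightarrow> j < i \<Longrightarrow> \<not> Q j"
  shows "least_candidate I Q = Some i"
proof -
  have "(LEAST i. i \<in> I \<and> Q i) = i"
    using assms by (intro Least_equality) (auto simp: not_less[symmetric])
  then show ?thesis
    using assms by (auto simp: least_candidate_def)
qed

lemma infinite_least_candidate_iff:
  fixes Q :: "nat \<Rightarrow> nat \<Rightarrow> bool"
  assumes i0: "i0 \<in> I" and confirmed: "infinite {t. Q i0 t}"
    and refuted: "\<And>i. i \<in> I \<Longrightarrow> i \<noteq> i0 \<Longrightarrow> finite {t. Q i t}"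
  shows "infinite {t. least_candidate I (\<lambda>i. Q i t) = Some i} \<longleftrightarrow> i = i0"
proof
  assume guessed: "infinite {t. least_candidate I (\<lambda>i. Q i t) = Some i}"
  then have "{t. least_candidate I (\<lambda>i. Q i t) = Some i} \<noteq> {}"
    by (metis finite.emptyI)
  then obtain t where "least_candidate I (\<lambda>i. Q i t) = Some i"
    by blast
  then have "i \<in> I"
    by (rule least_candidate_SomeD)
  moreover have "{t. least_candidate I (\<lambda>i. Q i t) = Some i} \<subseteq> {t. Q i t}"
    using least_candidate_SomeD(2) by blast
  then have "infinite {t. Q i t}"
    using guessed by (rule infinite_super)
  ultimately show "i = i0"
    using refuted by blast
next
  assume "i = i0"
  define early where "early = (\<Union>j\<in>{j\<in>I. j < i0}. {t. Q j t})"
  have "finite early"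
    using refuted unfolding early_def by auto
  then have "infinite ({t. Q i0 t} - early)"
    using confirmed by (rule Diff_infinite_finite)
  moreover have "{t. Q i0 t} - early \<subseteq> {t. least_candidate I (\<lambda>i. Q i t) = Some i0}"
    using i0 by (auto simp: early_def intro: least_candidate_eqI)
  ultimately show "infinite {t. least_candidate I (\<lambda>i. Q i t) = Some i}"
    using \<open>i = i0\<close> finite_subset by blast
qed

section \<open>E3-learnable families are PL-learnable\<close>

text \<open>\<open>a t k = Some v\<close> means that at stage \<open>t\<close> the \<open>k\<close>-th entry of the approximated sequence is
  known to be \<open>v\<close>.\<close>

definition approximates :: "(nat \<Rightarrow> nat \<Rightarrow> nat option) \<Rightarrow> (nat \<Rightarrow> nat) \<Rightarrow> bool" where
  "approximates a q \<longleftrightarrow>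
     (\<forall>t k v. a t k = Some v \<longrightarrow> v = q k) \<and> (\<forall>k. \<forall>\<^sub>F t in sequentially. a t k = Some (q k))"

definition disagreements :: "(nat \<Rightarrow> nat option) \<Rightarrow> (nat \<Rightarrow> nat) \<Rightarrow> nat \<Rightarrow> nat set" where
  "disagreements a r c = {n. \<exists>v. a (prod_encode (c, n)) = Some v \<and> v \<noteq> r (prod_encode (c, n))}"

definition prefers :: "(nat \<Rightarrow> nat option) \<Rightarrow> nat \<Rightarrow> (nat \<Rightarrow> nat) \<Rightarrow> (nat \<Rightarrow> nat) \<Rightarrow> bool" where
  "prefers a c r r' \<longleftrightarrow> (\<exists>n\<in>disagreements a r' c. \<forall>n'\<in>disagreements a r c. n' < n)"

lemma prefers_asym: "prefers a c r r' \<Longrightarrow> \<not> prefers a c r' r"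
  unfolding prefers_def by (meson less_asym)

lemma eventually_prefers:
  assumes a: "approximates a q" and r: "E0 (column r c) (column q c)"
    and r': "\<not> E0 (column r c) (column r' c)"
  shows "\<forall>\<^sub>F t in sequentially. prefers (a t) c r r'"
proof -
  obtain m where m: "\<And>n. m \<le> n \<Longrightarrow> r (prod_encode (c, n)) = q (prod_encode (c, n))"
    using r unfolding E0_def column_def by blast
  obtain n where "m \<le> n" and n: "r (prod_encode (c, n)) \<noteq> r' (prod_encode (c, n))"
    using r' unfolding E0_def column_def by (meson nat_le_linear le_trans)
  have late: "n' < n" if "n' \<in> disagreements (a t) r c" for t n'
  proof -
    have "q (prod_encode (c, n')) \<noteq> r (prod_encode (c, n'))"
      using that a unfolding disagreements_def approximates_def by auto
    then show ?thesis
      using m \<open>m \<le> n\<close> by (metis not_le le_less_trans)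
  qed
  have "\<forall>\<^sub>F t in sequentially. a t (prod_encode (c, n)) = Some (q (prod_encode (c, n)))"
    using a unfolding approximates_def by blast
  then show ?thesis
  proof (rule eventually_mono)
    fix t
    assume "a t (prod_encode (c, n)) = Some (q (prod_encode (c, n)))"
    then have "n \<in> disagreements (a t) r' c"
      using n m[OF \<open>m \<le> n\<close>] unfolding disagreements_def by auto
    then show "prefers (a t) c r r'"
      unfolding prefers_def using late by blast
  qed
qed

definition tournament_test ::
    "nat set \<Rightarrow> (nat \<Rightarrow> nat \<Rightarrow> nat) \<Rightarrow> (nat \<Rightarrow> nat \<Rightarrow> nat) \<Rightarrow> (nat \<Rightarrow> nat \<Rightarrow> nat option)
      \<Rightarrow> nat \<Rightarrow> nat \<Rightarrow> nat \<Rightarrow> bool" where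
  "tournament_test I p col a i t k \<longleftrightarrow>
     (\<forall>j\<in>I. j \<noteq> i \<longrightarrow> j < k \<longrightarrow> prefers (a t) (col i j) (p i) (p j))"

definition tournament_guess ::
    "nat set \<Rightarrow> (nat \<Rightarrow> nat \<Rightarrow> nat) \<Rightarrow> (nat \<Rightarrow> nat \<Rightarrow> nat) \<Rightarrow> (nat \<Rightarrow> nat \<Rightarrow> nat option)
      \<Rightarrow> nat \<Rightarrow> nat option" where
  "tournament_guess I p col a t =
     least_candidate I (\<lambda>i. counter_advances (tournament_test I p col a i) t)"

lemma tournament_guess_SomeD: "tournament_guess I p col a t = Some i \<Longrightarrow> i \<in> I"
  unfolding tournament_guess_def by (rule least_candidate_SomeD(1))

lemma tournament_guess_cong:
  assumes "\<And>u. u \<le> t \<Longrightarrow> a u = a' u"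
  shows "tournament_guess I p col a t = tournament_guess I p col a' t"
proof -
  have test: "tournament_test I p col a i u k = tournament_test I p col a' i u k" if "u \<le> t" for i u k
    using assms[OF that] by (simp add: tournament_test_def)
  have "counter (tournament_test I p col a i) t = counter (tournament_test I p col a' i) t" for i
    using test by (intro counter_cong) simp
  then show ?thesis
    unfolding tournament_guess_def counter_advances_def using test[of t] by simp
qed

lemma tournament_guess_correct:
  assumes sep: "\<And>i j. i \<in> I \<Longrightarrow> j \<in> I \<Longrightarrow> i \<noteq> j \<Longrightarrow>
                   \<not> E0 (column (p i) (col i j)) (column (p j) (col i j))"
    and i0: "i0 \<in> I" and q: "E3 (p i0) q" and a: "approximates a q"
  shows "infinite {t. tournament_guess I p col a t = Some i} \<longleftrightarrow> i = i0"
proof -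
  have E0_q: "E0 (column (p i0) c) (column q c)" for c
    using q unfolding E3_def by blast
  have wins: "\<forall>\<^sub>F t in sequentially. prefers (a t) (col i0 j) (p i0) (p j)"
    if "j \<in> I" "j \<noteq> i0" for j
    using that sep[OF i0 that(1)] by (intro eventually_prefers[OF a E0_q]) auto
  have loses: "\<forall>\<^sub>F t in sequentially. \<not> prefers (a t) (col i i0) (p i) (p i0)"
    if "i \<in> I" "i \<noteq> i0" for i
  proof -
    have "\<not> E0 (column (p i0) (col i i0)) (column (p i) (col i i0))"
      using sep[OF that(1) i0] that(2) E0_sym by blast
    then have "\<forall>\<^sub>F t in sequentially. prefers (a t) (col i i0) (p i0) (p i)"
      by (rule eventually_prefers[OF a E0_q])
    then show ?thesis
      by (rule eventually_mono) (rule prefers_asym)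
  qed
  have confirmed: "infinite {t. counter_advances (tournament_test I p col a i0) t}"
  proof (rule infinite_counter_advances)
    fix k
    have "\<forall>\<^sub>F t in sequentially. \<forall>j\<in>{j \<in> I. j < k \<and> j \<noteq> i0}. prefers (a t) (col i0 j) (p i0) (p j)"
      by (rule eventually_ball_finite) (auto intro: wins)
    then show "\<forall>\<^sub>F t in sequentially. tournament_test I p col a i0 t k"
      by (rule eventually_mono) (auto simp: tournament_test_def)
  qed
  have refuted: "finite {t. counter_advances (tournament_test I p col a i) t}"
    if "i \<in> I" "i \<noteq> i0" for i
  proof (rule finite_counter_advances)
    have "prefers (a t) (col i i0) (p i) (p i0)"
      if "tournament_test I p col a i t k" "Suc i0 \<le> k" for t k
      using that i0 \<open>i \<noteq> i0\<close> unfolding tournament_test_def by auto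
    then show "\<forall>\<^sub>F t in sequentially. \<forall>k\<ge>Suc i0. \<not> tournament_test I p col a i t k"
      using loses[OF that] by (auto elim: eventually_mono)
  qed
  show ?thesis
    unfolding tournament_guess_def using i0 confirmed refuted by (rule infinite_least_candidate_iff)
qed

definition determined_values ::
    "nat list \<Rightarrow> struc set \<Rightarrow> (struc \<Rightarrow> nat \<Rightarrow> nat) \<Rightarrow> struc \<Rightarrow> nat \<Rightarrow> nat \<Rightarrow> nat option" where
  "determined_values sig K \<Gamma> S t k =
     (if \<forall>S'\<in>LD sig K. restr S' t = restr S t \<longrightarrow> \<Gamma> S' k = \<Gamma> S k then Some (\<Gamma> S k) else None)"

lemma determined_values_cong:
  assumes "S \<in> LD sig K" "T \<in> LD sig K" "restr S t = restr T t"
  shows "determined_values sig K \<Gamma> S t = determined_values sig K \<Gamma> T t"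
  using assms unfolding determined_values_def fun_eq_iff by metis

lemma approximates_determined_values:
  assumes cont: "cont_on_LD sig K \<Gamma>" and S: "S \<in> LD sig K"
  shows "approximates (determined_values sig K \<Gamma> S) (\<Gamma> S)"
  unfolding approximates_def
proof (intro conjI allI)
  fix k
  obtain s where s: "\<And>S'. S' \<in> LD sig K \<Longrightarrow> restr S' s = restr S s \<Longrightarrow> \<Gamma> S' k = \<Gamma> S k"
    using cont S unfolding cont_on_LD_def by (meson lessI)
  show "\<forall>\<^sub>F t in sequentially. determined_values sig K \<Gamma> S t k = Some (\<Gamma> S k)"
    unfolding eventually_sequentially determined_values_def
    using s restr_mono by (metis (no_types, lifting))
qed (auto simp: determined_values_def split: if_splits)

definition E3_learner ::
    "nat list \<Rightarrow> struc set \<Rightarrow> (struc \<Rightarrow> nat \<Rightarrow> nat) \<Rightarrow> struc \<Rightarrow> nat \<Rightarrow> struc option" where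
  "E3_learner sig K \<Gamma> S t = map_option (from_nat_into K)
     (tournament_guess (to_nat_on K ` K) (\<lambda>i. \<Gamma> (from_nat_into K i))
        (\<lambda>i j. separating_column \<Gamma> (from_nat_into K i) (from_nat_into K j))
        (determined_values sig K \<Gamma> S) t)"

lemma E3_learner_local:
  assumes "S \<in> LD sig K" "T \<in> LD sig K" "restr S t = restr T t"
  shows "E3_learner sig K \<Gamma> S t = E3_learner sig K \<Gamma> T t"
proof -
  have "determined_values sig K \<Gamma> S u = determined_values sig K \<Gamma> T u" if "u \<le> t" for u
    using assms(1,2) restr_mono[OF assms(3) that] by (rule determined_values_cong)
  then have "tournament_guess I p col (determined_values sig K \<Gamma> S) t =
      tournament_guess I p col (determined_values sig K \<Gamma> T) t" for I p col
    by (rule tournament_guess_cong)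
  then show ?thesis
    unfolding E3_learner_def by simp
qed

lemma E3_learner_range:
  assumes "countable K" "E3_learner sig K \<Gamma> S t = Some B"
  shows "B \<in> K"
proof -
  obtain i where guess: "tournament_guess (to_nat_on K ` K) (\<lambda>i. \<Gamma> (from_nat_into K i))
      (\<lambda>i j. separating_column \<Gamma> (from_nat_into K i) (from_nat_into K j))
      (determined_values sig K \<Gamma> S) t = Some i" and B: "B = from_nat_into K i"
    using assms(2) unfolding E3_learner_def by blast
  have "i \<in> to_nat_on K ` K"
    using guess by (rule tournament_guess_SomeD)
  then show ?thesis
    using assms(1) B by auto
qed

lemma E3_learner_correct:
  assumes fam: "family sig K" and \<Gamma>: "E3_reduction sig K \<Gamma>"
    and S: "S \<in> LD sig K" and B: "B \<in> K"
  shows "infinite {t. E3_learner sig K \<Gamma> S t = Some B} \<longleftrightarrow> iso B S"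
proof -
  have K: "countable K"
    using fam unfolding family_def by blast
  let ?I = "to_nat_on K ` K" and ?A = "from_nat_into K"
  let ?guess = "tournament_guess ?I (\<lambda>i. \<Gamma> (?A i)) (\<lambda>i j. separating_column \<Gamma> (?A i) (?A j))
                  (determined_values sig K \<Gamma> S)"
  have A: "?A i \<in> K" "to_nat_on K (?A i) = i" if "i \<in> ?I" for i
    using that K by auto
  have sep: "\<not> E0 (column (\<Gamma> (?A i)) (separating_column \<Gamma> (?A i) (?A j)))
                  (column (\<Gamma> (?A j)) (separating_column \<Gamma> (?A i) (?A j)))"
    if "i \<in> ?I" "j \<in> ?I" "i \<noteq> j" for i j
    using separating_column[OF fam \<Gamma>] A that by metis
  obtain B0 where B0: "B0 \<in> K" "iso S B0"
    using S unfolding LD_def by blast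
  have "E3 (\<Gamma> B0) (\<Gamma> S)"
    using E3_reductionD(2)[OF \<Gamma> _ S] B0 iso_sym family_subset_LD[OF fam] by blast
  then have "E3 (\<Gamma> (?A (to_nat_on K B0))) (\<Gamma> S)"
    using K B0(1) by simp
  moreover have "to_nat_on K B0 \<in> ?I"
    using B0(1) by (rule imageI)
  ultimately have guess: "infinite {t. ?guess t = Some i} \<longleftrightarrow> i = to_nat_on K B0" for i
    using sep approximates_determined_values[OF E3_reductionD(1)[OF \<Gamma>] S]
    by (intro tournament_guess_correct)
  have "E3_learner sig K \<Gamma> S t = Some B \<longleftrightarrow> ?guess t = Some (to_nat_on K B)" for t
  proof (cases "?guess t")
    case (Some i)
    then have "i \<in> ?I"
      by (rule tournament_guess_SomeD)
    then show ?thesis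
      using Some A(2) B K unfolding E3_learner_def by auto
  qed (simp add: E3_learner_def)
  moreover have "iso B S \<longleftrightarrow> B = B0"
    using family_iso_unique[OF fam B B0(1)] B0(2) iso_sym by blast
  ultimately show ?thesis
    using guess B B0(1) K by simp
qed

theorem E3_learnable_imp_PL_learnable:
  assumes fam: "family sig K" and "E3_learnable sig K"
  shows "PL_learnable sig K"
proof -
  obtain \<Gamma> where \<Gamma>: "E3_reduction sig K \<Gamma>"
    using assms(2) E3_learnable_iff by blast
  have K: "countable K"
    using fam unfolding family_def by blast
  show ?thesis
  proof (rule PL_learnableI[where F = "E3_learner sig K \<Gamma>"])
    show "E3_learner sig K \<Gamma> S t = E3_learner sig K \<Gamma> T t"
      if "S \<in> LD sig K" "T \<in> LD sig K" "restr S t = restr T t" for S T t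
      using that by (rule E3_learner_local)
    show "B \<in> K" if "S \<in> LD sig K" "E3_learner sig K \<Gamma> S t = Some B" for S t B
      using K that(2) by (rule E3_learner_range)
    show "infinite {t. E3_learner sig K \<Gamma> S t = Some B} \<longleftrightarrow> iso B S"
      if "S \<in> LD sig K" "B \<in> K" for S B
      using fam \<Gamma> that by (rule E3_learner_correct)
  qed
qed

section \<open>Equivalence structures without classes of a given size\<close>

text \<open>The point \<open>(a, j, r)\<close> is the \<open>r\<close>-th element of the \<open>j\<close>-th class of size \<open>a\<close>, where size
  \<open>0\<close> stands for an infinite class. A bijection \<open>g\<close> from \<open>\<nat>\<close> onto \<open>points_without k\<close> presents a
  copy \<open>eqv_struc g\<close> of the structure \<open>A\<^sub>k\<close>, and \<open>struc_without k\<close> is one fixed such copy.\<close>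

type_synonym point = "nat \<times> nat \<times> nat"

definition class_of :: "point \<Rightarrow> nat \<times> nat" where
  "class_of = (\<lambda>(a, j, r). (a, j))"

definition points_without :: "nat \<Rightarrow> point set" where
  "points_without k = {(a, j, r). (a = 0 \<or> r < a) \<and> a \<noteq> k}"

definition eqv_struc :: "(nat \<Rightarrow> point) \<Rightarrow> struc" where
  "eqv_struc g = (\<lambda>i xs. i = 0 \<and> length xs = 2 \<and> class_of (g (xs ! 0)) = class_of (g (xs ! 1)))"

definition eclass :: "struc \<Rightarrow> nat \<Rightarrow> nat set" where
  "eclass S x = {y. S 0 [x, y]}"

definition struc_without :: "nat \<Rightarrow> struc" where
  "struc_without k = eqv_struc (from_nat_into (points_without k))"

definition struc_without_family :: "struc set" where
  "struc_without_family = struc_without ` {k. 1 \<le> k}"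

lemma class_of_apply [simp]: "class_of (a, j, r) = (a, j)"
  by (simp add: class_of_def)

lemma mem_points_without [simp]: "(a, j, r) \<in> points_without k \<longleftrightarrow> (a = 0 \<or> r < a) \<and> a \<noteq> k"
  by (simp add: points_without_def)

lemma infinite_points_without: "infinite (points_without k)"
proof -
  have "inj (\<lambda>j::nat. (Suc k, j, 0::nat))"
    by (auto intro: injI)
  then have "infinite (range (\<lambda>j::nat. (Suc k, j, 0::nat)))"
    by (rule range_inj_infinite)
  moreover have "range (\<lambda>j. (Suc k, j, 0)) \<subseteq> points_without k"
    by auto
  ultimately show ?thesis
    by (rule infinite_super[rotated])
qed

lemma bij_from_nat_into_points_without:
  "bij_betw (from_nat_into (points_without k)) UNIV (points_without k)"
  by (simp add: bij_betw_from_nat_into infinite_points_without)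

lemma eqv_struc_pair [simp]: "eqv_struc g 0 [x, y] \<longleftrightarrow> class_of (g x) = class_of (g y)"
  by (simp add: eqv_struc_def)

lemma is_struc_eqv_struc: "is_struc [2] (eqv_struc g)"
  by (simp add: is_struc_def eqv_struc_def)

lemma eqv_struc_map: "eqv_struc g i (map f xs) = eqv_struc (g \<circ> f) i xs"
  by (cases xs) (auto simp: eqv_struc_def length_Suc_conv)

lemma iso_eqv_struc_iff: "iso S (eqv_struc g) \<longleftrightarrow> (\<exists>f. bij f \<and> S = eqv_struc (g \<circ> f))"
  unfolding iso_def by (simp add: eqv_struc_map fun_eq_iff)

text \<open>For an infinite class both sides of the first equation are \<open>0\<close>.\<close>

lemma eclass_size:
  assumes g: "bij_betw g UNIV (points_without k)" and gx: "g x = (a, j, r)"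
  shows "card (eclass (eqv_struc g) x) = a" "finite (eclass (eqv_struc g) x) \<longleftrightarrow> a \<noteq> 0"
proof -
  have "a \<noteq> k"
    using g gx unfolding bij_betw_def by (metis mem_points_without rangeI)
  have "g ` eclass (eqv_struc g) x = {v \<in> range g. class_of v = (a, j)}"
    using gx by (auto simp: eclass_def)
  also have "\<dots> = {v \<in> points_without k. class_of v = (a, j)}"
    using g by (simp add: bij_betw_def)
  also have "\<dots> = (\<lambda>r. (a, j, r)) ` {r. a = 0 \<or> r < a}"
    using \<open>a \<noteq> k\<close> by (auto simp: class_of_def points_without_def)
  finally have image: "g ` eclass (eqv_struc g) x = (\<lambda>r. (a, j, r)) ` {r. a = 0 \<or> r < a}" .
  have inj: "inj_on g (eclass (eqv_struc g) x)" "inj_on (\<lambda>r. (a, j, r)) X" for X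
    using g by (auto simp: bij_betw_def intro: inj_on_subset inj_onI)
  have "card (eclass (eqv_struc g) x) = card (g ` eclass (eqv_struc g) x)"
    using inj(1) by (rule card_image[symmetric])
  also have "\<dots> = card {r. a = 0 \<or> r < a}"
    unfolding image using inj(2) by (rule card_image)
  finally show "card (eclass (eqv_struc g) x) = a"
    by (cases "a = 0") simp_all
  have "finite (eclass (eqv_struc g) x) \<longleftrightarrow> finite (g ` eclass (eqv_struc g) x)"
    using inj(1) by (rule finite_image_iff[symmetric])
  also have "\<dots> \<longleftrightarrow> finite {r. a = 0 \<or> r < a}"
    unfolding image using inj(2) by (rule finite_image_iff)
  finally show "finite (eclass (eqv_struc g) x) \<longleftrightarrow> a \<noteq> 0"
    by (cases "a = 0") simp_all
qed

lemma card_eclass_neq: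
  assumes "bij_betw g UNIV (points_without k)"
  shows "card (eclass (eqv_struc g) x) \<noteq> k"
proof -
  obtain a j r where gx: "g x = (a, j, r)"
    by (cases "g x") auto
  moreover have "g x \<in> points_without k"
    using assms by (auto simp: bij_betw_def)
  ultimately show ?thesis
    using eclass_size(1)[OF assms gx] by simp
qed

lemma eclass_of_size_exists:
  assumes g: "bij_betw g UNIV (points_without k)" and "1 \<le> i" "i \<noteq> k"
  shows "\<exists>x. finite (eclass (eqv_struc g) x) \<and> card (eclass (eqv_struc g) x) = i"
proof -
  have "(i, 0, 0) \<in> points_without k"
    using assms by simp
  then obtain x where gx: "g x = (i, 0, 0)"
    using g unfolding bij_betw_def by (metis imageE)
  then show ?thesis
    using eclass_size[OF g gx] \<open>1 \<le> i\<close> by auto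
qed

lemma iso_eqv_struc_copies:
  assumes g: "bij_betw g UNIV (points_without a)" and g': "bij_betw g' UNIV (points_without b)"
    and "1 \<le> a"
  shows "iso (eqv_struc g) (eqv_struc g') \<longleftrightarrow> a = b"
proof
  assume "iso (eqv_struc g) (eqv_struc g')"
  then obtain f where f: "bij f" and eq: "eqv_struc g = eqv_struc (g' \<circ> f)"
    unfolding iso_eqv_struc_iff by blast
  have g'f: "bij_betw (g' \<circ> f) UNIV (points_without b)"
    using bij_betw_trans[OF f g'] .
  show "a = b"
  proof (rule ccontr)
    assume "a \<noteq> b"
    then obtain x where "card (eclass (eqv_struc (g' \<circ> f)) x) = a"
      using eclass_of_size_exists[OF g'f \<open>1 \<le> a\<close>] by blast
    then show False
      using card_eclass_neq[OF g, of x] eq by simp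
  qed
next
  assume "a = b"
  define f where "f = inv_into UNIV g' \<circ> g"
  have "bij f"
    unfolding f_def using \<open>a = b\<close> g g' bij_betw_inv_into bij_betw_trans by blast
  moreover have "g x \<in> range g'" for x
    using \<open>a = b\<close> g g' by (auto simp: bij_betw_def)
  then have "g' \<circ> f = g"
    unfolding f_def by (simp add: fun_eq_iff f_inv_into_f)
  ultimately show "iso (eqv_struc g) (eqv_struc g')"
    unfolding iso_eqv_struc_iff by metis
qed

lemma iso_struc_without_iff: "1 \<le> a \<Longrightarrow> iso (struc_without a) (struc_without b) \<longleftrightarrow> a = b"
  unfolding struc_without_def
  by (rule iso_eqv_struc_copies[OF bij_from_nat_into_points_without bij_from_nat_into_points_without])

lemma struc_without_inject: "1 \<le> a \<Longrightarrow> struc_without a = struc_without b \<longleftrightarrow> a = b"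
  using iso_struc_without_iff iso_refl by metis

lemma LD_struc_without_family:
  "S \<in> LD [2] struc_without_family \<longleftrightarrow>
     (\<exists>k g. 1 \<le> k \<and> bij_betw g UNIV (points_without k) \<and> S = eqv_struc g)"
proof
  assume "S \<in> LD [2] struc_without_family"
  then obtain k where "1 \<le> k" "iso S (struc_without k)"
    unfolding LD_def struc_without_family_def by blast
  moreover from this obtain f where "bij f" "S = eqv_struc (from_nat_into (points_without k) \<circ> f)"
    unfolding struc_without_def iso_eqv_struc_iff by blast
  ultimately show "\<exists>k g. 1 \<le> k \<and> bij_betw g UNIV (points_without k) \<and> S = eqv_struc g"
    using bij_betw_trans[OF _ bij_from_nat_into_points_without] by blast
next
  assume "\<exists>k g. 1 \<le> k \<and> bij_betw g UNIV (points_without k) \<and> S = eqv_struc g"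
  then obtain k g where "1 \<le> k" "bij_betw g UNIV (points_without k)" "S = eqv_struc g"
    by blast
  then have "is_struc [2] S" "iso S (struc_without k)"
    unfolding struc_without_def
    using is_struc_eqv_struc iso_eqv_struc_copies[OF _ bij_from_nat_into_points_without] by auto
  then show "S \<in> LD [2] struc_without_family"
    unfolding LD_def struc_without_family_def using \<open>1 \<le> k\<close> by blast
qed

lemma copy_in_LD:
  "1 \<le> k \<Longrightarrow> bij_betw g UNIV (points_without k) \<Longrightarrow> eqv_struc g \<in> LD [2] struc_without_family"
  using LD_struc_without_family by blast

lemma struc_without_in_LD: "1 \<le> k \<Longrightarrow> struc_without k \<in> LD [2] struc_without_family"
  unfolding struc_without_def using copy_in_LD bij_from_nat_into_points_without by blast

lemma family_struc_without_family: "family [2] struc_without_family"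
  unfolding family_def struc_without_family_def
  using is_struc_eqv_struc iso_struc_without_iff by (auto simp: struc_without_def)

section \<open>The family is PL-learnable\<close>

definition class_count :: "struc \<Rightarrow> nat \<Rightarrow> nat \<Rightarrow> nat" where
  "class_count S u x = card {y \<in> eclass S x. y \<le> u \<and> x \<le> u}"

definition size_test :: "struc \<Rightarrow> nat \<Rightarrow> nat \<Rightarrow> nat \<Rightarrow> bool" where
  "size_test S i u c \<longleftrightarrow> (\<forall>x\<le>c. class_count S u x \<noteq> i)"

definition size_guess :: "struc \<Rightarrow> nat \<Rightarrow> nat option" where
  "size_guess S t = least_candidate {i. 1 \<le> i} (\<lambda>i. counter_advances (size_test S i) t)"

lemma class_count_local:
  assumes "restr S t = restr T t" "u \<le> t"
  shows "class_count S u x = class_count T u x"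
proof -
  have "S 0 [x, y] \<longleftrightarrow> T 0 [x, y]" if "x \<le> u" "y \<le> u" for y
    using assms that unfolding restr_eq_iff by simp
  then have "{y \<in> eclass S x. y \<le> u \<and> x \<le> u} = {y \<in> eclass T x. y \<le> u \<and> x \<le> u}"
    by (auto simp: eclass_def)
  then show ?thesis
    by (simp add: class_count_def)
qed

lemma size_guess_SomeD: "size_guess S t = Some i \<Longrightarrow> 1 \<le> i"
  unfolding size_guess_def using least_candidate_SomeD(1) by blast

lemma size_guess_local:
  assumes "restr S t = restr T t"
  shows "size_guess S t = size_guess T t"
proof -
  have test: "size_test S i u c = size_test T i u c" if "u \<le> t" for i u c
    using class_count_local[OF assms that] by (simp add: size_test_def)
  then have "counter (size_test S i) t = counter (size_test T i) t" for i
    by (intro counter_cong) simp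
  then show ?thesis
    unfolding size_guess_def counter_advances_def using test[of t] by simp
qed

lemma eventually_class_count_finite:
  assumes "finite (eclass S x)"
  shows "\<forall>\<^sub>F u in sequentially. class_count S u x = card (eclass S x)"
proof -
  have "{y \<in> eclass S x. y \<le> u \<and> x \<le> u} = eclass S x" if "max x (Max (insert 0 (eclass S x))) \<le> u" for u
    using that assms by auto
  then show ?thesis
    unfolding eventually_sequentially class_count_def by metis
qed

lemma eventually_class_count_infinite:
  assumes "infinite (eclass S x)"
  shows "\<forall>\<^sub>F u in sequentially. k < class_count S u x"
proof -
  obtain F where F: "F \<subseteq> eclass S x" "finite F" "card F = Suc k"
    using infinite_arbitrarily_large[OF assms] by blast
  have "k < class_count S u x" if "max x (Max (insert 0 F)) \<le> u" for u
  proof -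
    have "F \<subseteq> {y \<in> eclass S x. y \<le> u \<and> x \<le> u}"
      using F that by auto
    then have "card F \<le> class_count S u x"
      unfolding class_count_def by (rule card_mono[rotated]) simp
    then show ?thesis
      using F by simp
  qed
  then show ?thesis
    unfolding eventually_sequentially by blast
qed

lemma size_guess_correct:
  assumes g: "bij_betw g UNIV (points_without k)" and "1 \<le> k"
  shows "infinite {t. size_guess (eqv_struc g) t = Some i} \<longleftrightarrow> i = k"
proof -
  let ?S = "eqv_struc g"
  have "infinite {t. counter_advances (size_test ?S k) t}"
  proof (rule infinite_counter_advances)
    fix c
    have "\<forall>\<^sub>F u in sequentially. class_count ?S u x \<noteq> k" for x
    proof (cases "finite (eclass ?S x)")
      case True
      show ?thesis
        using eventually_class_count_finite[OF True] by (rule eventually_mono) (simp add: card_eclass_neq[OF g])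
    next
      case False
      show ?thesis
        using eventually_class_count_infinite[OF False, of k] by (rule eventually_mono) simp
    qed
    then have "\<forall>\<^sub>F u in sequentially. \<forall>x\<in>{..c}. class_count ?S u x \<noteq> k"
      by (simp add: eventually_ball_finite_distrib)
    then show "\<forall>\<^sub>F u in sequentially. size_test ?S k u c"
      by (rule eventually_mono) (simp add: size_test_def)
  qed
  moreover have "finite {t. counter_advances (size_test ?S i) t}"
    if i: "i \<in> {i. 1 \<le> i}" "i \<noteq> k" for i
  proof -
    obtain x where x: "finite (eclass ?S x)" "card (eclass ?S x) = i"
      using eclass_of_size_exists[OF g _ i(2)] i(1) by auto
    have "\<forall>\<^sub>F u in sequentially. class_count ?S u x = i"
      using eventually_class_count_finite[OF x(1)] x(2) by simp
    then have "\<forall>\<^sub>F u in sequentially. \<forall>c\<ge>x. \<not> size_test ?S i u c"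
      by (rule eventually_mono) (auto simp: size_test_def)
    then show ?thesis
      by (rule finite_counter_advances)
  qed
  ultimately show ?thesis
    unfolding size_guess_def using \<open>1 \<le> k\<close> by (intro infinite_least_candidate_iff) auto
qed

theorem PL_learnable_struc_without_family: "PL_learnable [2] struc_without_family"
proof (rule PL_learnableI[where F = "\<lambda>S t. map_option struc_without (size_guess S t)"])
  fix S T t
  assume "restr S t = restr T t"
  then have "size_guess S t = size_guess T t"
    by (rule size_guess_local)
  then show "map_option struc_without (size_guess S t) = map_option struc_without (size_guess T t)"
    by simp
next
  fix S t B
  assume "map_option struc_without (size_guess S t) = Some B"
  then obtain j where "size_guess S t = Some j" "B = struc_without j"
    by auto
  then show "B \<in> struc_without_family"
    unfolding struc_without_family_def using size_guess_SomeD by blast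
next
  fix S B
  assume S: "S \<in> LD [2] struc_without_family" and B: "B \<in> struc_without_family"
  obtain k g where k: "1 \<le> k" and g: "bij_betw g UNIV (points_without k)" and Sg: "S = eqv_struc g"
    using S LD_struc_without_family by blast
  obtain i where i: "1 \<le> i" and Bi: "B = struc_without i"
    using B unfolding struc_without_family_def by blast
  have "map_option struc_without (size_guess S t) = Some B \<longleftrightarrow> size_guess S t = Some i" for t
  proof (cases "size_guess S t")
    case (Some j)
    then show ?thesis
      using Bi struc_without_inject[OF size_guess_SomeD[OF Some]] by auto
  qed simp
  moreover have "iso B S \<longleftrightarrow> i = k"
    using iso_eqv_struc_copies[OF bij_from_nat_into_points_without g i] Bi Sg
    by (simp add: struc_without_def)
  ultimately show "infinite {t. map_option struc_without (size_guess S t) = Some B} \<longleftrightarrow> iso B S"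
    using size_guess_correct[OF g k] Sg by simp
qed

section \<open>The family is not E3-learnable\<close>

lemma extend_to_bij:
  fixes h :: "nat \<Rightarrow> 'a"
  assumes F: "finite F" and h: "inj_on h F" "h ` F \<subseteq> B" and B: "countable B" "infinite B"
  shows "\<exists>g. bij_betw g UNIV B \<and> (\<forall>x\<in>F. g x = h x)"
proof -
  define A' where "A' = UNIV - F"
  define B' where "B' = B - h ` F"
  have "infinite A'" "infinite B'"
    unfolding A'_def B'_def using F B by (simp_all add: Diff_infinite_finite)
  have "bij_betw (to_nat_on A') A' UNIV"
    using \<open>infinite A'\<close> by (intro to_nat_on_infinite) simp
  moreover have "bij_betw (from_nat_into B') UNIV B'"
    using \<open>infinite B'\<close> B by (intro bij_betw_from_nat_into) (simp add: B'_def)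
  ultimately have k: "bij_betw (from_nat_into B' \<circ> to_nat_on A') A' B'"
    by (rule bij_betw_trans)
  define g where "g x = (if x \<in> F then h x else (from_nat_into B' \<circ> to_nat_on A') x)" for x
  have "bij_betw g F (h ` F)"
    by (subst bij_betw_cong[where g = h]) (simp_all add: g_def inj_on_imp_bij_betw h(1))
  moreover have "bij_betw g A' B'"
    using k by (subst bij_betw_cong[where g = "from_nat_into B' \<circ> to_nat_on A'"]) (simp_all add: g_def A'_def)
  ultimately have "bij_betw g (F \<union> A') (h ` F \<union> B')"
    by (rule bij_betw_combine) (auto simp: B'_def)
  moreover have "F \<union> A' = UNIV" "h ` F \<union> B' = B"
    unfolding A'_def B'_def using h(2) by auto
  ultimately show ?thesis
    by (intro exI[of _ g]) (simp add: g_def)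
qed

lemma bij_betw_limit:
  fixes H :: "nat \<Rightarrow> nat \<Rightarrow> 'a"
  assumes bij: "\<And>j. bij_betw (H j) UNIV B"
    and coherent: "\<And>j x. x < M j \<Longrightarrow> H (Suc j) x = H j x"
    and mono: "\<And>j. M j \<le> M (Suc j)" and grow: "\<And>j. j < M (Suc j)"
    and covers: "\<And>b. b \<in> B \<Longrightarrow> \<exists>j. \<exists>x<M j. H j x = b"
  shows "\<exists>g. bij_betw g UNIV B \<and> (\<forall>j x. x < M j \<longrightarrow> g x = H j x)"
proof -
  have stable: "H j x = H i x" if "i \<le> j" "x < M i" for i j x
    using that(1)
  proof (induction j rule: dec_induct)
    case (step j)
    then show ?case
      using coherent lift_Suc_mono_le[of M, OF mono] that(2) order_less_le_trans by metis
  qed simp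
  define g where "g x = H (Suc x) x" for x
  have g: "g x = H j x" if "x < M j" for j x
    using stable[of j "max j (Suc x)" x] stable[of "Suc x" "max j (Suc x)" x] grow[of x] that
    unfolding g_def by simp
  have "inj g"
  proof (rule injI)
    fix x y
    assume "g x = g y"
    moreover have "x < M (Suc (max x y))" "y < M (Suc (max x y))"
      using grow[of "max x y"] by auto
    ultimately show "x = y"
      using g bij[of "Suc (max x y)"] unfolding bij_betw_def inj_def by metis
  qed
  moreover have "range g = B"
    using bij covers g unfolding g_def bij_betw_def by (auto simp: image_iff) metis
  ultimately show ?thesis
    using g by (auto simp: bij_betw_def)
qed

lemma unforced_extension:
  fixes \<Phi> :: "(nat \<Rightarrow> 'a) \<Rightarrow> nat \<Rightarrow> nat"
  assumes unforced: "bij_betw g UNIV B" "\<forall>x<m. g x = h x" "j \<le> n" "\<Phi> g n \<noteq> v n"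
    and "b \<in> B"
    and cont: "\<exists>s. \<forall>g'. bij_betw g' UNIV B \<longrightarrow> (\<forall>x<s. g' x = g x) \<longrightarrow> \<Phi> g' n = \<Phi> g n"
  shows "\<exists>m'. (\<forall>x<m. g x = h x) \<and> m \<le> m' \<and> j < m' \<and> (\<exists>x<m'. g x = b) \<and>
           (\<exists>n\<ge>j. \<Phi> g n \<noteq> v n \<and> (\<forall>g'. bij_betw g' UNIV B \<longrightarrow> (\<forall>x<m'. g' x = g x) \<longrightarrow> \<Phi> g' n = \<Phi> g n))"
proof -
  obtain s where s: "\<forall>g'. bij_betw g' UNIV B \<longrightarrow> (\<forall>x<s. g' x = g x) \<longrightarrow> \<Phi> g' n = \<Phi> g n"
    using cont by blast
  obtain z where "g z = b"
    using unforced(1) \<open>b \<in> B\<close> unfolding bij_betw_def by (metis imageE)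
  define m' where "m' = Suc (m + j + s + z)"
  have "\<forall>g'. bij_betw g' UNIV B \<longrightarrow> (\<forall>x<m'. g' x = g x) \<longrightarrow> \<Phi> g' n = \<Phi> g n"
    using s unfolding m'_def by auto
  then have "\<exists>n\<ge>j. \<Phi> g n \<noteq> v n \<and>
      (\<forall>g'. bij_betw g' UNIV B \<longrightarrow> (\<forall>x<m'. g' x = g x) \<longrightarrow> \<Phi> g' n = \<Phi> g n)"
    using unforced(3,4) by blast
  moreover have "\<exists>x<m'. g x = b"
    using \<open>g z = b\<close> unfolding m'_def by (intro exI[of _ z]) simp
  ultimately show ?thesis
    using unforced(2) by (intro exI[of _ m']) (simp add: m'_def)
qed

text \<open>A Baire category argument on the space of enumerations of \<open>B\<close>: otherwise, extending
  finite pieces one stage at a time by enumerations that disagree with \<open>v\<close> late, and fixing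
  enough of each to keep that disagreement, yields an enumeration disagreeing with \<open>v\<close> beyond
  every bound.\<close>

lemma bij_eventually_eq_forced:
  fixes \<Phi> :: "(nat \<Rightarrow> 'a) \<Rightarrow> nat \<Rightarrow> nat" and B :: "'a set"
  assumes B: "countable B" "infinite B"
    and cont: "\<And>g n. bij_betw g UNIV B \<Longrightarrow>
                 \<exists>s. \<forall>g'. bij_betw g' UNIV B \<longrightarrow> (\<forall>x<s. g' x = g x) \<longrightarrow> \<Phi> g' n = \<Phi> g n"
    and tail: "\<And>g. bij_betw g UNIV B \<Longrightarrow> E0 (\<Phi> g) v"
  shows "\<exists>h m N. bij_betw h UNIV B \<and>
           (\<forall>g. bij_betw g UNIV B \<longrightarrow> (\<forall>x<m. g x = h x) \<longrightarrow> (\<forall>n\<ge>N. \<Phi> g n = v n))"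
proof (rule ccontr)
  assume not_forced: "\<not> ?thesis"
  define e where "e = from_nat_into B"
  have e: "bij_betw e UNIV B"
    unfolding e_def using B by (rule bij_betw_from_nat_into)
  define extends where "extends j = (\<lambda>(h, m) (g, m'). (\<forall>x<m. g x = h x) \<and> m \<le> m' \<and> j < m' \<and>
      (\<exists>x<m'. g x = e j) \<and>
      (\<exists>n\<ge>j. \<Phi> g n \<noteq> v n \<and> (\<forall>g'. bij_betw g' UNIV B \<longrightarrow> (\<forall>x<m'. g' x = g x) \<longrightarrow> \<Phi> g' n = \<Phi> g n)))"
    for j
  have "\<exists>hm'. bij_betw (fst hm') UNIV B \<and> extends j hm hm'" if "bij_betw (fst hm) UNIV B" for j hm
  proof -
    obtain h m where hm: "hm = (h, m)"
      by fastforce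
    have "bij_betw h UNIV B"
      using that hm by simp
    then obtain g n where g: "bij_betw g UNIV B" "\<forall>x<m. g x = h x" "j \<le> n" "\<Phi> g n \<noteq> v n"
      using not_forced by blast
    have "e j \<in> B"
      using e by (metis bij_betw_def rangeI)
    then have "\<exists>m'. extends j hm (g, m')"
      unfolding extends_def hm prod.case
      by (rule unforced_extension[where \<Phi> = \<Phi> and v = v and n = n, OF g _ cont[OF g(1)]])
    then show ?thesis
      using g(1) by auto
  qed
  then obtain f where f: "\<And>j. bij_betw (fst (f j)) UNIV B" "\<And>j. extends j (f j) (f (Suc j))"
    using dependent_nat_choice[of "\<lambda>_ g. bij_betw (fst g) UNIV B" extends] e by force
  define H where "H j = fst (f j)" for j
  define M where "M j = snd (f j)" for j
  have step: "\<forall>x<M j. H (Suc j) x = H j x" "M j \<le> M (Suc j)" "j < M (Suc j)"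
    "\<exists>x<M (Suc j). H (Suc j) x = e j"
    "\<exists>n\<ge>j. \<Phi> (H (Suc j)) n \<noteq> v n \<and>
       (\<forall>g'. bij_betw g' UNIV B \<longrightarrow> (\<forall>x<M (Suc j). g' x = H (Suc j) x) \<longrightarrow> \<Phi> g' n = \<Phi> (H (Suc j)) n)"
    for j
    using f(2)[of j] unfolding extends_def H_def M_def by (auto split: prod.splits)
  have "\<exists>j. \<exists>x<M j. H j x = b" if "b \<in> B" for b
    using step(4) e that unfolding bij_betw_def by (metis imageE)
  then obtain g where g: "bij_betw g UNIV B" "\<And>j x. x < M j \<Longrightarrow> g x = H j x"
    using bij_betw_limit[of H B M] f(1) step unfolding H_def by blast
  have "\<exists>n\<ge>j. \<Phi> g n \<noteq> v n" for j
    using step(5)[of j] g by metis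
  then show False
    using tail[OF g(1)] unfolding E0_def by (meson le_trans nat_le_linear)
qed

lemma restr_eqv_struc_eq:
  assumes "\<And>x y. x \<le> s \<Longrightarrow> y \<le> s \<Longrightarrow> class_of (g x) = class_of (g y) \<longleftrightarrow> class_of (g' x) = class_of (g' y)"
  shows "restr (eqv_struc g) s = restr (eqv_struc g') s"
proof -
  have "(eqv_struc g i xs \<and> (\<forall>x\<in>set xs. x \<le> s)) \<longleftrightarrow> (eqv_struc g' i xs \<and> (\<forall>x\<in>set xs. x \<le> s))"
    for i xs
    using assms by (cases xs) (auto simp: eqv_struc_def length_Suc_conv)
  then show ?thesis
    unfolding restr_def by (simp add: fun_eq_iff)
qed

lemma inj_relabel_outside:
  assumes "finite R"
  shows "\<exists>J. inj (\<lambda>c. if c \<in> R then c else (0, J + prod_encode c))"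
proof -
  define J where "J = Suc (Max (insert 0 (snd ` R)))"
  have J: "snd c < J" if "c \<in> R" for c
    unfolding J_def using that assms by (intro le_imp_less_Suc Max_ge) auto
  have "inj (\<lambda>c. if c \<in> R then c else (0, J + prod_encode c))"
  proof (rule injI)
    fix c c'
    assume "(if c \<in> R then c else (0, J + prod_encode c)) = (if c' \<in> R then c' else (0, J + prod_encode c'))"
    then show "c = c'"
      using J[of "(0, J + prod_encode c)"] J[of "(0, J + prod_encode c')"] by (auto split: if_splits)
  qed
  then show ?thesis ..
qed

text \<open>The classes of \<open>\<tau>\<close> not met by \<open>h\<close> below \<open>m\<close> are moved to fresh infinite classes; this
  keeps the equivalence pattern of \<open>\<tau>\<close> while avoiding the class size \<open>l\<close>.\<close>

lemma relabel_outside_classes: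
  fixes \<tau> h :: "nat \<Rightarrow> point"
  assumes "1 \<le> l" and \<tau>: "bij_betw \<tau> UNIV (points_without k)"
    and h: "h ` {..<m} \<subseteq> points_without l" and agree: "\<And>x. x < m \<Longrightarrow> \<tau> x = h x"
  shows "\<exists>\<rho>. inj \<rho> \<and> range \<rho> \<subseteq> points_without l \<and> (\<forall>x<m. \<rho> x = h x) \<and>
           (\<forall>x y. class_of (\<rho> x) = class_of (\<rho> y) \<longleftrightarrow> class_of (\<tau> x) = class_of (\<tau> y))"
proof -
  define R where "R = class_of ` h ` {..<m}"
  have "finite R"
    unfolding R_def by simp
  then obtain J where "inj (\<lambda>c. if c \<in> R then c else (0, J + prod_encode c))"
    using inj_relabel_outside by blast
  define relabel where "relabel c = (if c \<in> R then c else (0, J + prod_encode c))" for c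
  define \<rho> where "\<rho> y = (if class_of (\<tau> y) \<in> R then \<tau> y else (0, J + prod_encode (class_of (\<tau> y)), y))"
    for y
  have class_\<rho>: "class_of (\<rho> y) = relabel (class_of (\<tau> y))" for y
    unfolding \<rho>_def relabel_def by simp
  have "inj relabel"
    unfolding relabel_def by fact
  then have same_class: "class_of (\<rho> x) = class_of (\<rho> y) \<longleftrightarrow> class_of (\<tau> x) = class_of (\<tau> y)" for x y
    unfolding class_\<rho> by (simp add: inj_eq)
  have "inj \<rho>"
  proof (rule injI)
    fix x y
    assume "\<rho> x = \<rho> y"
    moreover have "inj \<tau>"
      using \<tau> by (simp add: bij_betw_def)
    ultimately show "x = y"
      using same_class[of x y] unfolding \<rho>_def by (auto split: if_splits dest: injD)
  qed
  moreover have "\<rho> y \<in> points_without l" for y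
  proof (cases "class_of (\<tau> y) \<in> R")
    case True
    then obtain x where "x < m" "class_of (\<tau> y) = class_of (h x)"
      unfolding R_def by auto
    moreover have "\<tau> y \<in> points_without k"
      using \<tau> by (auto simp: bij_betw_def)
    ultimately show ?thesis
      using True h unfolding \<rho>_def points_without_def class_of_def by auto
  next
    case False
    then show ?thesis
      using \<open>1 \<le> l\<close> unfolding \<rho>_def by simp
  qed
  moreover have "\<rho> x = h x" if "x < m" for x
    using agree[OF that] that unfolding \<rho>_def R_def by simp
  ultimately show ?thesis
    using same_class by blast
qed

lemma copy_approximable:
  assumes "1 \<le> l" and h: "bij_betw h UNIV (points_without l)"
    and hk: "\<And>x. x < m \<Longrightarrow> fst (class_of (h x)) \<noteq> k"
  shows "\<exists>\<tau>. bij_betw \<tau> UNIV (points_without k) \<and>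
           (\<forall>s. \<exists>g. bij_betw g UNIV (points_without l) \<and> (\<forall>x<m. g x = h x) \<and>
                    restr (eqv_struc g) s = restr (eqv_struc \<tau>) s)"
proof -
  have hU: "h ` {..<m} \<subseteq> points_without l"
    using h by (auto simp: bij_betw_def)
  then have "h ` {..<m} \<subseteq> points_without k"
    using hk by (force simp: points_without_def class_of_def)
  moreover have "inj_on h {..<m}"
    using h by (auto simp: bij_betw_def intro: inj_on_subset)
  ultimately obtain \<tau> where \<tau>: "bij_betw \<tau> UNIV (points_without k)" "\<forall>x\<in>{..<m}. \<tau> x = h x"
    using extend_to_bij[of "{..<m}" h] infinite_points_without by blast
  obtain \<rho> where \<rho>: "inj \<rho>" "range \<rho> \<subseteq> points_without l" "\<forall>x<m. \<rho> x = h x"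
    and same_class: "\<And>x y. class_of (\<rho> x) = class_of (\<rho> y) \<longleftrightarrow> class_of (\<tau> x) = class_of (\<tau> y)"
    using relabel_outside_classes[OF \<open>1 \<le> l\<close> \<tau>(1) hU] \<tau>(2) by auto
  have "\<exists>g. bij_betw g UNIV (points_without l) \<and> (\<forall>x<m. g x = h x) \<and>
          restr (eqv_struc g) s = restr (eqv_struc \<tau>) s" for s
  proof -
    have "inj_on \<rho> ({..s} \<union> {..<m})" "\<rho> ` ({..s} \<union> {..<m}) \<subseteq> points_without l"
      using \<rho>(1,2) by (auto intro: inj_on_subset)
    then obtain g where g: "bij_betw g UNIV (points_without l)" "\<forall>x\<in>{..s} \<union> {..<m}. g x = \<rho> x"
      using extend_to_bij[OF _ _ _ countableI_type infinite_points_without] by blast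
    have "restr (eqv_struc g) s = restr (eqv_struc \<tau>) s"
      using g(2) same_class by (intro restr_eqv_struc_eq) simp
    then show ?thesis
      using g \<rho>(3) by auto
  qed
  then show ?thesis
    using \<tau>(1) by blast
qed


definition forces_column ::
    "(struc \<Rightarrow> nat \<Rightarrow> nat) \<Rightarrow> nat \<Rightarrow> nat \<Rightarrow> (nat \<Rightarrow> point) \<Rightarrow> nat \<Rightarrow> nat \<Rightarrow> bool" where
  "forces_column \<Gamma> c l h m N \<longleftrightarrow>
     (\<forall>g. bij_betw g UNIV (points_without l) \<longrightarrow> (\<forall>x<m. g x = h x) \<longrightarrow>
        (\<forall>n\<ge>N. column (\<Gamma> (eqv_struc g)) c n = column (\<Gamma> (struc_without l)) c n))"

context
  fixes \<Gamma> :: "struc \<Rightarrow> nat \<Rightarrow> nat"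
  assumes \<Gamma>: "E3_reduction [2] struc_without_family \<Gamma>"
begin

lemma E0_column_copies:
  "1 \<le> k \<Longrightarrow> bij_betw g UNIV (points_without k) \<Longrightarrow>
     E0 (column (\<Gamma> (eqv_struc g)) c) (column (\<Gamma> (struc_without k)) c)"
  using E3_reductionD(2)[OF \<Gamma> copy_in_LD struc_without_in_LD] iso_eqv_struc_copies
    bij_from_nat_into_points_without
  unfolding struc_without_def E3_def by blast

lemma column_forced:
  assumes "1 \<le> l"
  shows "\<exists>h m N. bij_betw h UNIV (points_without l) \<and> forces_column \<Gamma> c l h m N"
  unfolding forces_column_def
proof (rule bij_eventually_eq_forced)
  fix g :: "nat \<Rightarrow> point" and n
  assume g: "bij_betw g UNIV (points_without l)"
  obtain s where s: "\<forall>S'\<in>LD [2] struc_without_family. restr S' s = restr (eqv_struc g) s \<longrightarrow>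
      (\<forall>k<Suc (prod_encode (c, n)). \<Gamma> S' k = \<Gamma> (eqv_struc g) k)"
    using E3_reductionD(1)[OF \<Gamma>] copy_in_LD[OF \<open>1 \<le> l\<close> g] unfolding cont_on_LD_def by blast
  have "column (\<Gamma> (eqv_struc g')) c n = column (\<Gamma> (eqv_struc g)) c n"
    if "bij_betw g' UNIV (points_without l)" "\<forall>x<Suc s. g' x = g x" for g'
    using s copy_in_LD[OF \<open>1 \<le> l\<close> that(1)] restr_eqv_struc_eq[of s g' g] that(2)
    unfolding column_def by simp
  then show "\<exists>s. \<forall>g'. bij_betw g' UNIV (points_without l) \<longrightarrow> (\<forall>x<s. g' x = g x) \<longrightarrow>
      column (\<Gamma> (eqv_struc g')) c n = column (\<Gamma> (eqv_struc g)) c n"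
    by blast
qed (use \<open>1 \<le> l\<close> E0_column_copies infinite_points_without in auto)

lemma forced_column_transfers:
  assumes "1 \<le> l" "1 \<le> k" and forced: "forces_column \<Gamma> c l h m N"
    and h: "bij_betw h UNIV (points_without l)" and hk: "\<And>x. x < m \<Longrightarrow> fst (class_of (h x)) \<noteq> k"
  shows "E0 (column (\<Gamma> (struc_without k)) c) (column (\<Gamma> (struc_without l)) c)"
proof -
  obtain \<tau> where \<tau>: "bij_betw \<tau> UNIV (points_without k)"
    and approx: "\<And>s. \<exists>g. bij_betw g UNIV (points_without l) \<and> (\<forall>x<m. g x = h x) \<and>
                      restr (eqv_struc g) s = restr (eqv_struc \<tau>) s"
    using copy_approximable[OF \<open>1 \<le> l\<close> h hk] by blast
  have "column (\<Gamma> (eqv_struc \<tau>)) c n = column (\<Gamma> (struc_without l)) c n" if "N \<le> n" for n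
  proof -
    obtain s where s: "\<forall>S'\<in>LD [2] struc_without_family. restr S' s = restr (eqv_struc \<tau>) s \<longrightarrow>
        (\<forall>k<Suc (prod_encode (c, n)). \<Gamma> S' k = \<Gamma> (eqv_struc \<tau>) k)"
      using E3_reductionD(1)[OF \<Gamma>] copy_in_LD[OF \<open>1 \<le> k\<close> \<tau>] unfolding cont_on_LD_def by blast
    obtain g where g: "bij_betw g UNIV (points_without l)" "\<forall>x<m. g x = h x"
      "restr (eqv_struc g) s = restr (eqv_struc \<tau>) s"
      using approx by blast
    have "\<Gamma> (eqv_struc g) (prod_encode (c, n)) = \<Gamma> (eqv_struc \<tau>) (prod_encode (c, n))"
      using s copy_in_LD[OF \<open>1 \<le> l\<close> g(1)] g(3) lessI by blast
    moreover have "column (\<Gamma> (eqv_struc g)) c n = column (\<Gamma> (struc_without l)) c n"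
      using forced g(1,2) that unfolding forces_column_def by blast
    ultimately show ?thesis
      unfolding column_def by simp
  qed
  then have "E0 (column (\<Gamma> (eqv_struc \<tau>)) c) (column (\<Gamma> (struc_without l)) c)"
    unfolding E0_def by blast
  with E0_sym[OF E0_column_copies[OF \<open>1 \<le> k\<close> \<tau>]] show ?thesis
    by (rule E0_trans)
qed

end

theorem not_E3_learnable_struc_without_family: "\<not> E3_learnable [2] struc_without_family"
proof
  assume "E3_learnable [2] struc_without_family"
  then obtain \<Gamma> where \<Gamma>: "E3_reduction [2] struc_without_family \<Gamma>"
    unfolding E3_learnable_iff by blast
  define c where "c = separating_column \<Gamma> (struc_without 1) (struc_without 2)"
  have c: "\<not> E0 (column (\<Gamma> (struc_without 1)) c) (column (\<Gamma> (struc_without 2)) c)"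
    unfolding c_def using separating_column[OF family_struc_without_family \<Gamma>] struc_without_inject[of 1 2]
    by (simp add: struc_without_family_def)
  obtain h1 m1 N1 h2 m2 N2 where
    forced: "forces_column \<Gamma> c 1 h1 m1 N1" "forces_column \<Gamma> c 2 h2 m2 N2"
    and h: "bij_betw h1 UNIV (points_without 1)" "bij_betw h2 UNIV (points_without 2)"
    using column_forced[OF \<Gamma>, of 1 c] column_forced[OF \<Gamma>, of 2 c] by auto
  define k where "k = Suc (Max (insert 0 ((\<lambda>x. fst (class_of (h1 x))) ` {..<m1} \<union>
                                          (\<lambda>x. fst (class_of (h2 x))) ` {..<m2})))"
  have "fst (class_of (h1 x)) \<noteq> k" if "x < m1" for x
    using that unfolding k_def by (simp add: le_imp_less_Suc less_imp_neq)
  moreover have "fst (class_of (h2 x)) \<noteq> k" if "x < m2" for x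
    using that unfolding k_def by (simp add: le_imp_less_Suc less_imp_neq)
  ultimately have "E0 (column (\<Gamma> (struc_without k)) c) (column (\<Gamma> (struc_without 1)) c)"
    "E0 (column (\<Gamma> (struc_without k)) c) (column (\<Gamma> (struc_without 2)) c)"
    using forced_column_transfers[OF \<Gamma> _ _ forced(1) h(1)] forced_column_transfers[OF \<Gamma> _ _ forced(2) h(2)]
    by (simp_all add: k_def)
  then show False
    using c E0_sym E0_trans by blast
qed

theorem mainTheorem19:
  shows "(\<forall>sig K. family sig K \<and> E3_learnable sig K \<longrightarrow> PL_learnable sig K) \<and>
         (\<exists>sig K. family sig K \<and> PL_learnable sig K \<and> \<not> E3_learnable sig K)"
  using E3_learnable_imp_PL_learnable family_struc_without_family
    PL_learnable_struc_without_family not_E3_learnable_struc_without_family by blast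

end
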